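(* Let $G=(V,E)$ be a connected Eulerian digraph and $s\in V$ any vertex. Then the degree of the parking function enumerator ${\rm park}_{G,s}$ equals $|E|-|V|+1-{\rm minfas}(G)$, where ${\rm minfas}(G)$ is the minimum cardinality of a feedback arc set of $G$. Equivalently, in the greedoid polynomial of the branching greedoid of $G$ rooted at $s$, the coefficient of $x^i$ is zero for $i=0,\dots,{\rm minfas}(G)-1$ and nonzero for $i={\rm minfas}(G)$. *)

theory Defs
  imports Main "HOL-Computational_Algebra.Polynomial"
begin

text \<open>A finite directed multigraph (loops and parallel arcs allowed) is given by a
vertex set V, an arc set E and tail/head maps tail, head on arcs.\<close>

definition digraph :: "'v set \<Rightarrow> 'e set \<Rightarrow> ('e \<Rightarrow> 'v) \<Rightarrow> ('e \<Rightarrow> 'v) \<Rightarrow> bool" where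
  "digraph V E tail head \<longleftrightarrow> finite V \<and> finite E \<and> tail ` E \<subseteq> V \<and> head ` E \<subseteq> V"

definition arcrel :: "'e set \<Rightarrow> ('e \<Rightarrow> 'v) \<Rightarrow> ('e \<Rightarrow> 'v) \<Rightarrow> ('v \<times> 'v) set" where
  "arcrel A tail head = {(tail e, head e) | e. e \<in> A}"

definition connected_digraph :: "'v set \<Rightarrow> 'e set \<Rightarrow> ('e \<Rightarrow> 'v) \<Rightarrow> ('e \<Rightarrow> 'v) \<Rightarrow> bool" where
  "connected_digraph V E tail head \<longleftrightarrow>
     (\<forall>u\<in>V. \<forall>v\<in>V. (u, v) \<in> (arcrel E tail head \<union> (arcrel E tail head)\<inverse>)\<^sup>*)"

definition eulerian :: "'v set \<Rightarrow> 'e set \<Rightarrow> ('e \<Rightarrow> 'v) \<Rightarrow> ('e \<Rightarrow> 'v) \<Rightarrow> bool" where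
  "eulerian V E tail head \<longleftrightarrow>
     (\<forall>v\<in>V. card {e\<in>E. tail e = v} = card {e\<in>E. head e = v})"

definition has_dicycle :: "'e set \<Rightarrow> ('e \<Rightarrow> 'v) \<Rightarrow> ('e \<Rightarrow> 'v) \<Rightarrow> bool" where
  "has_dicycle A tail head \<longleftrightarrow>
     (\<exists>es. es \<noteq> [] \<and> set es \<subseteq> A \<and>
        (\<forall>i < length es. head (es ! i) = tail (es ! ((i + 1) mod length es))))"

definition feedback_arc_set :: "'e set \<Rightarrow> ('e \<Rightarrow> 'v) \<Rightarrow> ('e \<Rightarrow> 'v) \<Rightarrow> 'e set \<Rightarrow> bool" where
  "feedback_arc_set E tail head F \<longleftrightarrow> F \<subseteq> E \<and> \<not> has_dicycle (E - F) tail head"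

definition minfas :: "'e set \<Rightarrow> ('e \<Rightarrow> 'v) \<Rightarrow> ('e \<Rightarrow> 'v) \<Rightarrow> nat" where
  "minfas E tail head = Min (card ` {F. feedback_arc_set E tail head F})"

definition parking_functions ::
  "'v set \<Rightarrow> 'e set \<Rightarrow> ('e \<Rightarrow> 'v) \<Rightarrow> ('e \<Rightarrow> 'v) \<Rightarrow> 'v \<Rightarrow> ('v \<Rightarrow> nat) set" where
  "parking_functions V E tail head s =
     {f. (\<forall>v. v \<notin> V - {s} \<longrightarrow> f v = 0) \<and>
         (\<forall>S. S \<subseteq> V - {s} \<and> S \<noteq> {} \<longrightarrow>
              (\<exists>v\<in>S. f v < card {e\<in>E. head e = v \<and> tail e \<notin> S}))}"

definition park :: "'v set \<Rightarrow> 'e set \<Rightarrow> ('e \<Rightarrow> 'v) \<Rightarrow> ('e \<Rightarrow> 'v) \<Rightarrow> 'v \<Rightarrow> int poly" where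
  "park V E tail head s =
     (\<Sum>f\<in>parking_functions V E tail head s. monom 1 (\<Sum>v\<in>V - {s}. f v))"

text \<open>Feasible sets of the branching greedoid rooted at s: arc sets forming an
  arborescence rooted at s (all arcs directed away from s).\<close>
definition branching :: "'e set \<Rightarrow> ('e \<Rightarrow> 'v) \<Rightarrow> ('e \<Rightarrow> 'v) \<Rightarrow> 'v \<Rightarrow> 'e set \<Rightarrow> bool" where
  "branching E tail head s A \<longleftrightarrow>
     A \<subseteq> E \<and> inj_on head A \<and> s \<notin> head ` A \<and>
     (\<forall>e\<in>A. (s, head e) \<in> (arcrel A tail head)\<^sup>*)"

definition branching_rank :: "'e set \<Rightarrow> ('e \<Rightarrow> 'v) \<Rightarrow> ('e \<Rightarrow> 'v) \<Rightarrow> 'v \<Rightarrow> 'e set \<Rightarrow> nat" where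
  "branching_rank E tail head s A = Max (card ` {B. B \<subseteq> A \<and> branching E tail head s B})"

text \<open>Greedoid polynomial (Bjoerner-Korte-Lovasz), in the Tutte-polynomial form
  lambda(x) = f(1, x - 1) = sum over A \<subseteq> E with r(A) = r(E) of (x-1)^(|A| - r(A)).\<close>
definition greedoid_poly_branching ::
  "'e set \<Rightarrow> ('e \<Rightarrow> 'v) \<Rightarrow> ('e \<Rightarrow> 'v) \<Rightarrow> 'v \<Rightarrow> int poly" where
  "greedoid_poly_branching E tail head s =
     (\<Sum>A\<in>{A. A \<subseteq> E \<and> branching_rank E tail head s A = branching_rank E tail head s E}.
        [:-1, 1:] ^ (card A - branching_rank E tail head s A))"

end

theory Submission
  imports Defs
begin

text \<open>
  For a vertex order \<open>pos\<close>, the arcs not increasing \<open>pos\<close> form a feedback arc set, and every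
  minimum one arises this way. Peeling off the vertices that witness the parking condition turns a
  parking function \<open>f\<close> into an order in which each \<open>v \<noteq> s\<close> has at least \<open>f v + 1\<close> forward
  in-arcs, so the level of \<open>f\<close> is at most \<open>|E| - (|V| - 1) - minfas\<close>. In an Eulerian digraph the
  cut condition lets one move blocks of vertices to the top of an optimal order without creating
  backward arcs; this yields an optimal order with \<open>s\<close> first in which every other vertex has a
  forward in-arc, and one less than the number of forward in-arcs is a parking function attaining
  the bound.

  For the greedoid polynomial, fix a list of the arcs and let a greedy search from \<open>s\<close> choose a
  branching inside every arc set of full rank. The sets yielding a given branching \<open>T\<close> form an
  interval \<open>[T, M]\<close>, so the polynomial is \<open>\<Sum>\<^sub>T x\<^bsup>|M - T|\<^esup>\<close>. The arcs outside \<open>M - T\<close> go forward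
  in the order in which the search reaches vertices, so \<open>|M - T| \<ge> minfas\<close>; and listing the
  forward in-arcs of the optimal order above last, sorted by heads, produces a tree with
  \<open>M - T\<close> inside its backward arcs.
\<close>

lemma rtrancl_crosses_boundary:
  "(x, y) \<in> r\<^sup>* \<Longrightarrow> x \<in> P \<Longrightarrow> y \<notin> P \<Longrightarrow> \<exists>a b. (a, b) \<in> r \<and> a \<in> P \<and> b \<notin> P"
  by (induction rule: rtrancl_induct) auto

lemma arcrel_mono: "A \<subseteq> B \<Longrightarrow> arcrel A tail head \<subseteq> arcrel B tail head"
  unfolding arcrel_def by auto

lemma increasing_arcs_acyclic:
  fixes \<tau> :: "'v \<Rightarrow> nat"
  assumes increasing: "\<forall>e\<in>A. \<tau> (tail e) < \<tau> (head e)"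
  shows "\<not> has_dicycle A tail head"
proof
  assume "has_dicycle A tail head"
  then obtain es where es: "es \<noteq> []" "set es \<subseteq> A"
    and closed: "\<forall>i < length es. head (es ! i) = tail (es ! ((i + 1) mod length es))"
    unfolding has_dicycle_def by blast
  define L where "L = length es"
  have in_A: "i < L \<Longrightarrow> es ! i \<in> A" for i using es(2) L_def by auto
  have climb: "i < L \<Longrightarrow> \<tau> (tail (es ! 0)) + i \<le> \<tau> (tail (es ! i))" for i
  proof (induction i)
    case (Suc i)
    have "head (es ! i) = tail (es ! Suc i)" using closed Suc.prems L_def by simp
    then show ?case using Suc increasing in_A[of i] by fastforce
  qed simp
  have last: "L - 1 < L" using es(1) L_def by simp
  have "head (es ! (L - 1)) = tail (es ! ((L - 1 + 1) mod L))" using closed last L_def by simp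
  then have "head (es ! (L - 1)) = tail (es ! 0)" using last by simp
  with climb[OF last] increasing in_A[OF last] show False by fastforce
qed

lemma trancl_arcrel_walk:
  assumes "(u, v) \<in> (arcrel A tail head)\<^sup>+"
  shows "\<exists>es. es \<noteq> [] \<and> set es \<subseteq> A \<and> tail (hd es) = u \<and> head (last es) = v \<and>
           (\<forall>i. Suc i < length es \<longrightarrow> head (es ! i) = tail (es ! Suc i))"
  using assms
proof (induction rule: trancl_induct)
  case (base y)
  then obtain e where "e \<in> A" "tail e = u" "head e = y" unfolding arcrel_def by blast
  then show ?case by (intro exI[of _ "[e]"]) auto
next
  case (step y z)
  then obtain es where es: "es \<noteq> []" "set es \<subseteq> A" "tail (hd es) = u" "head (last es) = y"
    "\<forall>i. Suc i < length es \<longrightarrow> head (es ! i) = tail (es ! Suc i)" by blast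
  from step obtain e where e: "e \<in> A" "tail e = y" "head e = z" unfolding arcrel_def by blast
  show ?case
  proof (intro exI[of _ "es @ [e]"] conjI allI impI)
    fix i assume i: "Suc i < length (es @ [e])"
    show "head ((es @ [e]) ! i) = tail ((es @ [e]) ! Suc i)"
    proof (cases "Suc i < length es")
      case True then show ?thesis using es(5) by (simp add: nth_append)
    next
      case False
      then have "i = length es - 1" using i by simp
      then show ?thesis using es(1,4) e by (simp add: nth_append last_conv_nth)
    qed
  qed (use es e in auto)
qed

lemma trancl_arcrel_loop_imp_dicycle:
  assumes "(u, u) \<in> (arcrel A tail head)\<^sup>+"
  shows "has_dicycle A tail head"
proof -
  obtain es where es: "es \<noteq> []" "set es \<subseteq> A" "tail (hd es) = u" "head (last es) = u"
    and chain: "\<forall>i. Suc i < length es \<longrightarrow> head (es ! i) = tail (es ! Suc i)"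
    using trancl_arcrel_walk[OF assms] by blast
  have "head (es ! i) = tail (es ! ((i + 1) mod length es))" if i: "i < length es" for i
  proof (cases "Suc i < length es")
    case True then show ?thesis using chain by simp
  next
    case False
    then have "Suc i = length es" using i by simp
    then show ?thesis using es by (metis Suc_eq_plus1 diff_Suc_1 hd_conv_nth last_conv_nth mod_self)
  qed
  then show ?thesis unfolding has_dicycle_def using es by blast
qed

lemma sum_Pow_power_card:
  fixes p :: "'a::comm_ring_1"
  assumes "finite X"
  shows "(\<Sum>D\<in>Pow X. p ^ card D) = (p + 1) ^ card X"
  using prod_add[OF assms, of "\<lambda>_. p" "\<lambda>_. 1"] by simp

lemma hd_filter_disj:
  "filter (\<lambda>x. P x \<or> Q x) xs \<noteq> [] \<Longrightarrow>
   hd (filter (\<lambda>x. P x \<or> Q x) xs) = hd (filter P xs) \<or> hd (filter (\<lambda>x. P x \<or> Q x) xs) = hd (filter Q xs)"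
  by (induction xs) auto

lemma hd_filter_sorted_le:
  "sorted (map f xs) \<Longrightarrow> x \<in> set (filter P xs) \<Longrightarrow> f (hd (filter P xs)) \<le> (f x :: nat)"
  by (induction xs) auto

lemma coeff_sum_monom_one:
  assumes "finite X"
  shows "coeff (\<Sum>x\<in>X. monom (1::int) (g x)) i = int (card {x\<in>X. g x = i})"
proof -
  have "coeff (\<Sum>x\<in>X. monom (1::int) (g x)) i = (\<Sum>x\<in>X. if g x = i then 1 else 0)"
    by (simp add: coeff_sum coeff_monom)
  also have "\<dots> = int (card {x\<in>X. g x = i})"
    using assms by (simp add: sum.If_cases[of X "\<lambda>x. g x = i"] Int_def)
  finally show ?thesis .
qed

lemma degree_sum_monom_one:
  assumes "finite X" "x \<in> X" "g x = d" "\<forall>y\<in>X. g y \<le> d"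
  shows "degree (\<Sum>x\<in>X. monom (1::int) (g x)) = d"
proof (rule antisym)
  show "degree (\<Sum>x\<in>X. monom (1::int) (g x)) \<le> d"
  proof (rule degree_le, intro allI impI)
    fix i assume "d < i"
    then have "{x\<in>X. g x = i} = {}" using assms(4) by force
    then show "coeff (\<Sum>x\<in>X. monom (1::int) (g x)) i = 0"
      using coeff_sum_monom_one[OF assms(1)] by (metis card.empty of_nat_0)
  qed
  have "card {x\<in>X. g x = d} \<noteq> 0" using assms(1-3) by auto
  then have "coeff (\<Sum>x\<in>X. monom (1::int) (g x)) d \<noteq> 0"
    using coeff_sum_monom_one[OF assms(1)] by simp
  then show "d \<le> degree (\<Sum>x\<in>X. monom (1::int) (g x))" by (rule le_degree)
qed

section \<open>Vertex orders and feedback arc sets\<close>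

locale fin_digraph =
  fixes V :: "'v set" and E :: "'e set" and tail head :: "'e \<Rightarrow> 'v"
  assumes digraph: "digraph V E tail head"
begin

lemma finite_V: "finite V" and finite_E: "finite E"
  using digraph by (auto simp: digraph_def)

lemma tail_in_V: "e \<in> E \<Longrightarrow> tail e \<in> V" and head_in_V: "e \<in> E \<Longrightarrow> head e \<in> V"
  using digraph by (auto simp: digraph_def)

lemma card_arcs_preimage:
  assumes "finite X"
  shows "card {e\<in>E. g e \<in> X} = (\<Sum>v\<in>X. card {e\<in>E. g e = v})"
proof -
  have "{e\<in>E. g e \<in> X} = (\<Union>v\<in>X. {e\<in>E. g e = v})" by auto
  moreover have "card (\<Union>v\<in>X. {e\<in>E. g e = v}) = (\<Sum>v\<in>X. card {e\<in>E. g e = v})"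
    by (rule card_UN_disjoint) (use assms finite_E in auto)
  ultimately show ?thesis by simp
qed

text \<open>Rank each vertex by the number of its strict ancestors.\<close>

lemma acyclic_imp_topological_order:
  assumes "A \<subseteq> E" and acyclic: "\<not> has_dicycle A tail head"
  shows "\<exists>pos :: 'v \<Rightarrow> nat. \<forall>e\<in>A. pos (tail e) < pos (head e)"
proof -
  define anc where "anc v = {u. (u, v) \<in> (arcrel A tail head)\<^sup>+}" for v
  have anc_V: "anc v \<subseteq> V" for v
  proof
    fix u assume "u \<in> anc v"
    then have "(u, v) \<in> (arcrel A tail head)\<^sup>+" unfolding anc_def by simp
    then obtain w where "(u, w) \<in> arcrel A tail head" by (meson tranclD)
    then show "u \<in> V" using \<open>A \<subseteq> E\<close> tail_in_V unfolding arcrel_def by auto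
  qed
  have "card (anc (tail e)) < card (anc (head e))" if e: "e \<in> A" for e
  proof -
    have arc: "(tail e, head e) \<in> arcrel A tail head" using e unfolding arcrel_def by blast
    have "anc (tail e) \<subseteq> anc (head e)" unfolding anc_def using arc
      by (auto intro: trancl_into_trancl)
    moreover have "tail e \<in> anc (head e)" unfolding anc_def using arc by auto
    moreover have "tail e \<notin> anc (tail e)"
      unfolding anc_def using trancl_arcrel_loop_imp_dicycle[of "tail e" A] acyclic by auto
    ultimately have "anc (tail e) \<subset> anc (head e)" by blast
    then show ?thesis using anc_V finite_V by (meson finite_subset psubset_card_mono)
  qed
  then show ?thesis by (intro exI[of _ "\<lambda>v. card (anc v)"]) simp
qed

lemma feedback_arc_set_E: "feedback_arc_set E tail head E"
  unfolding feedback_arc_set_def has_dicycle_def by auto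

lemma finite_feedback_arc_sets: "finite {F. feedback_arc_set E tail head F}"
proof (rule finite_subset)
  show "{F. feedback_arc_set E tail head F} \<subseteq> Pow E" unfolding feedback_arc_set_def by auto
qed (simp add: finite_E)

lemma minfas_le: "feedback_arc_set E tail head F \<Longrightarrow> minfas E tail head \<le> card F"
  unfolding minfas_def using finite_feedback_arc_sets by auto

lemma minfas_attained: "\<exists>F. feedback_arc_set E tail head F \<and> card F = minfas E tail head"
proof -
  have "minfas E tail head \<in> card ` {F. feedback_arc_set E tail head F}"
    unfolding minfas_def using finite_feedback_arc_sets feedback_arc_set_E by (intro Min_in) auto
  then show ?thesis by auto
qed

definition backward_arcs :: "('v \<Rightarrow> nat) \<Rightarrow> 'e set" where
  "backward_arcs pos = {e\<in>E. pos (head e) \<le> pos (tail e)}"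

definition forward_arcs :: "('v \<Rightarrow> nat) \<Rightarrow> 'e set" where
  "forward_arcs pos = {e\<in>E. pos (tail e) < pos (head e)}"

definition lift_above :: "'v set \<Rightarrow> ('v \<Rightarrow> nat) \<Rightarrow> 'v \<Rightarrow> nat" where
  "lift_above P pos = (\<lambda>v. if v \<in> V - P then pos v + Suc (Max (pos ` V)) else pos v)"

lemma lift_above_eq: "v \<notin> V - P \<Longrightarrow> lift_above P pos v = pos v"
  unfolding lift_above_def by simp

lemma lift_above_less:
  assumes "u \<in> V" "u \<notin> V - P" "v \<in> V - P"
  shows "lift_above P pos u < lift_above P pos v"
proof -
  have "pos u \<le> Max (pos ` V)" using assms(1) finite_V by simp
  then show ?thesis using assms unfolding lift_above_def by simp
qed

lemma card_backward_arcs_plus_forward_arcs: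
  "card (backward_arcs pos) + card (forward_arcs pos) = card E"
proof -
  have "E = backward_arcs pos \<union> forward_arcs pos"
    and "backward_arcs pos \<inter> forward_arcs pos = {}"
    unfolding backward_arcs_def forward_arcs_def by auto
  then show ?thesis using finite_E by (metis card_Un_disjoint finite_Un)
qed

lemma feedback_arc_set_backward_arcs: "feedback_arc_set E tail head (backward_arcs pos)"
  unfolding feedback_arc_set_def
  by (rule conjI, simp add: backward_arcs_def, rule increasing_arcs_acyclic[of _ pos])
     (auto simp: backward_arcs_def)

lemma minfas_le_backward_arcs: "minfas E tail head \<le> card (backward_arcs pos)"
  using minfas_le feedback_arc_set_backward_arcs by blast

lemma exists_order_backward_arcs_minfas:
  "\<exists>pos. card (backward_arcs pos) = minfas E tail head"
proof -
  obtain F where F: "feedback_arc_set E tail head F" "card F = minfas E tail head"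
    using minfas_attained by blast
  obtain pos :: "'v \<Rightarrow> nat" where pos: "\<forall>e\<in>E - F. pos (tail e) < pos (head e)"
    using acyclic_imp_topological_order[of "E - F"] F(1) unfolding feedback_arc_set_def by auto
  have "backward_arcs pos \<subseteq> F" unfolding backward_arcs_def using pos by force
  then have "card (backward_arcs pos) \<le> card F"
    using F(1) finite_E unfolding feedback_arc_set_def by (meson card_mono finite_subset)
  then show ?thesis using minfas_le_backward_arcs[of pos] F(2) by (intro exI[of _ pos]) simp
qed

end

section \<open>Cuts in Eulerian digraphs\<close>

locale eulerian_digraph = fin_digraph V E tail head
  for V :: "'v set" and E :: "'e set" and tail head :: "'e \<Rightarrow> 'v" +
  assumes eulerian: "eulerian V E tail head"
begin

lemma card_arcs_leaving_eq_entering: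
  assumes X: "X \<subseteq> V"
  shows "card {e\<in>E. tail e \<in> X \<and> head e \<notin> X} = card {e\<in>E. head e \<in> X \<and> tail e \<notin> X}"
proof -
  have split: "card {e\<in>E. p e} = card {e\<in>E. p e \<and> q e} + card {e\<in>E. p e \<and> \<not> q e}" for p q
  proof -
    have "{e\<in>E. p e} = {e\<in>E. p e \<and> q e} \<union> {e\<in>E. p e \<and> \<not> q e}" by auto
    then show ?thesis by (simp only:) (rule card_Un_disjoint; use finite_E in auto)
  qed
  have fin: "finite X" using X finite_V finite_subset by blast
  have "card {e\<in>E. tail e \<in> X} = card {e\<in>E. head e \<in> X}"
    using card_arcs_preimage[OF fin, of tail] card_arcs_preimage[OF fin, of head] eulerian X
    unfolding eulerian_def by (metis (no_types, lifting) subsetD sum.cong)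
  moreover have "{e\<in>E. head e \<in> X \<and> tail e \<in> X} = {e\<in>E. tail e \<in> X \<and> head e \<in> X}" by blast
  ultimately show ?thesis
    using split[of "\<lambda>e. tail e \<in> X" "\<lambda>e. head e \<in> X"] split[of "\<lambda>e. head e \<in> X" "\<lambda>e. tail e \<in> X"]
    by simp
qed

lemma card_arcs_from_complement_eq:
  assumes "P \<subseteq> V"
  shows "card {e\<in>E. tail e \<in> V - P \<and> head e \<in> P} = card {e\<in>E. tail e \<in> P \<and> head e \<in> V - P}"
proof -
  have "{e\<in>E. tail e \<in> V - P \<and> head e \<notin> V - P} = {e\<in>E. tail e \<in> V - P \<and> head e \<in> P}"
    using head_in_V assms by auto
  moreover have "{e\<in>E. head e \<in> V - P \<and> tail e \<notin> V - P} = {e\<in>E. tail e \<in> P \<and> head e \<in> V - P}"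
    using tail_in_V assms by auto
  ultimately show ?thesis using card_arcs_leaving_eq_entering[of "V - P"] by simp
qed

text \<open>Lifting \<open>V - P\<close> above \<open>P\<close> turns the arcs from \<open>P\<close> to \<open>V - P\<close> (all backward by
  assumption) into forward arcs and the arcs from \<open>V - P\<close> to \<open>P\<close> into backward arcs; by the
  Eulerian property there are equally many of each.\<close>

lemma card_backward_arcs_lift_above_le:
  assumes P: "P \<subseteq> V"
    and backward: "\<forall>e\<in>E. tail e \<in> P \<and> head e \<in> V - P \<longrightarrow> pos (head e) \<le> pos (tail e)"
  shows "card (backward_arcs (lift_above P pos)) \<le> card (backward_arcs pos)"
proof -
  define PQ where "PQ = {e\<in>E. tail e \<in> P \<and> head e \<in> V - P}"
  define QP where "QP = {e\<in>E. tail e \<in> V - P \<and> head e \<in> P}"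
  define inner where "inner = {e\<in>backward_arcs pos. tail e \<in> P \<longleftrightarrow> head e \<in> P}"
  have "backward_arcs (lift_above P pos) \<subseteq> inner \<union> QP"
  proof
    fix e assume "e \<in> backward_arcs (lift_above P pos)"
    then have e: "e \<in> E" and le: "lift_above P pos (head e) \<le> lift_above P pos (tail e)"
      unfolding backward_arcs_def by auto
    have V: "tail e \<in> V" "head e \<in> V" using e tail_in_V head_in_V by auto
    have "\<not> (tail e \<in> P \<and> head e \<notin> P)"
      using le lift_above_less[of "tail e" P "head e" pos] V by auto
    moreover have "pos (head e) \<le> pos (tail e)" if "tail e \<in> P \<longleftrightarrow> head e \<in> P"
      using le that V unfolding lift_above_def by (auto split: if_splits)
    ultimately show "e \<in> inner \<union> QP" using e V unfolding inner_def QP_def backward_arcs_def by auto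
  qed
  then have "card (backward_arcs (lift_above P pos)) \<le> card (inner \<union> QP)"
    using finite_E unfolding inner_def QP_def backward_arcs_def by (intro card_mono) auto
  also have "\<dots> \<le> card inner + card PQ"
    using card_Un_le[of inner QP] card_arcs_from_complement_eq[OF P] unfolding PQ_def QP_def by simp
  also have "\<dots> = card (inner \<union> PQ)"
    using finite_E unfolding inner_def PQ_def backward_arcs_def by (intro card_Un_disjoint[symmetric]) auto
  also have "\<dots> \<le> card (backward_arcs pos)"
    using finite_E backward unfolding inner_def PQ_def backward_arcs_def by (intro card_mono) auto
  finally show ?thesis .
qed

end

locale connected_eulerian_digraph = eulerian_digraph V E tail head
  for V :: "'v set" and E :: "'e set" and tail head :: "'e \<Rightarrow> 'v" +
  assumes connected: "connected_digraph V E tail head"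
begin

lemma exists_arc_leaving:
  assumes P: "P \<subseteq> V" "P \<noteq> {}" "P \<noteq> V"
  shows "\<exists>e\<in>E. tail e \<in> P \<and> head e \<notin> P"
proof (rule ccontr)
  assume none: "\<not> ?thesis"
  obtain p q where pq: "p \<in> P" "q \<in> V" "q \<notin> P" using P by blast
  have "(p, q) \<in> (arcrel E tail head \<union> (arcrel E tail head)\<inverse>)\<^sup>*"
    using connected P pq unfolding connected_digraph_def by blast
  from rtrancl_crosses_boundary[OF this pq(1,3)] none
  obtain e where "e \<in> E" "head e \<in> P" "tail e \<notin> P" unfolding arcrel_def by auto
  then have "card {e\<in>E. head e \<in> P \<and> tail e \<notin> P} \<noteq> 0"
    using finite_E by (auto simp: card_eq_0_iff)
  moreover have "{e\<in>E. tail e \<in> P \<and> head e \<notin> P} = {}" using none by auto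
  then have "card {e\<in>E. tail e \<in> P \<and> head e \<notin> P} = 0" by (metis card.empty)
  ultimately show False using card_arcs_leaving_eq_entering[OF P(1)] by linarith
qed

end

section \<open>Parking functions and vertex orders\<close>

locale rooted_digraph = fin_digraph V E tail head
  for V :: "'v set" and E :: "'e set" and tail head :: "'e \<Rightarrow> 'v" +
  fixes s :: 'v
  assumes root_in_V: "s \<in> V"
begin

abbreviation parking_fns :: "('v \<Rightarrow> nat) set" where
  "parking_fns \<equiv> parking_functions V E tail head s"

lemma card_V_minus_root: "card (V - {s}) = card V - 1"
  using root_in_V finite_V by simp

lemma card_V_pos: "card V \<ge> 1"
  using root_in_V finite_V by (metis One_nat_def Suc_leI card_gt_0_iff empty_iff)

lemma parking_fn_outside: "f \<in> parking_fns \<Longrightarrow> v \<notin> V - {s} \<Longrightarrow> f v = 0"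
  by (simp add: parking_functions_def)

lemma parking_fn_le_card_E:
  assumes f: "f \<in> parking_fns" and v: "v \<in> V - {s}"
  shows "f v \<le> card E"
proof -
  have "f v < card {e\<in>E. head e = v \<and> tail e \<notin> {v}}"
    using f v unfolding parking_functions_def by (auto dest!: spec[of _ "{v}"])
  moreover have "card {e\<in>E. head e = v \<and> tail e \<notin> {v}} \<le> card E"
    using finite_E by (intro card_mono) auto
  ultimately show ?thesis by simp
qed

lemma finite_parking_fns: "finite parking_fns"
proof (rule finite_subset)
  show "parking_fns \<subseteq> {f. \<forall>v. (v \<in> V - {s} \<longrightarrow> f v \<in> {..card E}) \<and> (v \<notin> V - {s} \<longrightarrow> f v = 0)}"
    using parking_fn_le_card_E parking_fn_outside by auto
  show "finite {f. \<forall>v. (v \<in> V - {s} \<longrightarrow> f v \<in> {..card E}) \<and> (v \<notin> V - {s} \<longrightarrow> f v = (0::nat))}"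
    by (rule finite_set_of_finite_funs) (use finite_V in simp, simp)
qed

text \<open>Placing a vertex that witnesses the parking condition for \<open>S\<close> below the rest of \<open>S\<close>
  makes its more than \<open>f v\<close> arcs from outside \<open>S\<close> count, and the remaining arcs are handled by
  induction on \<open>S - {v}\<close>.\<close>

lemma parking_fn_forward_arcs_bound:
  assumes f: "f \<in> parking_fns"
  shows "S \<subseteq> V - {s} \<Longrightarrow> \<exists>pos::'v\<Rightarrow>nat. (\<Sum>v\<in>S. f v) + card S \<le>
     card {e\<in>E. head e \<in> S \<and> (tail e \<notin> S \<or> pos (tail e) < pos (head e))}"
proof (induction "card S" arbitrary: S)
  case 0
  then have "S = {}" using finite_V by (metis card_0_eq finite_Diff finite_subset)
  then show ?case by simp
next
  case (Suc k)
  have fin: "finite S" using Suc.prems finite_V finite_subset by blast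
  have "S \<noteq> {}" using Suc.hyps(2) by auto
  then obtain v where v: "v \<in> S" "f v < card {e\<in>E. head e = v \<and> tail e \<notin> S}"
    using f Suc.prems unfolding parking_functions_def by blast
  define S' where "S' = S - {v}"
  have card_S': "card S' = k" using Suc.hyps(2) v(1) fin unfolding S'_def by simp
  obtain pos' :: "'v \<Rightarrow> nat" where IH: "(\<Sum>v\<in>S'. f v) + card S' \<le>
     card {e\<in>E. head e \<in> S' \<and> (tail e \<notin> S' \<or> pos' (tail e) < pos' (head e))}"
    using Suc.hyps(1)[of S'] card_S' Suc.prems unfolding S'_def by auto
  define pos where "pos = (\<lambda>u. if u = v then 0 else pos' u + 1)"
  define A1 where "A1 = {e\<in>E. head e = v \<and> tail e \<notin> S}"
  define A2 where "A2 = {e\<in>E. head e \<in> S' \<and> (tail e \<notin> S' \<or> pos' (tail e) < pos' (head e))}"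
  define A where "A = {e\<in>E. head e \<in> S \<and> (tail e \<notin> S \<or> pos (tail e) < pos (head e))}"
  have "A1 \<subseteq> A" unfolding A1_def A_def using v by auto
  moreover have "A2 \<subseteq> A"
    unfolding A2_def A_def pos_def S'_def by auto
  ultimately have sub: "A1 \<union> A2 \<subseteq> A" by blast
  have disj: "A1 \<inter> A2 = {}" unfolding A1_def A2_def S'_def by auto
  have fin_A: "finite A1" "finite A2" "finite A" using finite_E unfolding A1_def A2_def A_def by auto
  have "(\<Sum>v\<in>S. f v) + card S = f v + 1 + ((\<Sum>v\<in>S'. f v) + card S')"
    using fin v(1) card_S' Suc.hyps(2) unfolding S'_def by (simp add: sum.remove)
  also have "\<dots> \<le> card A1 + card A2" using v(2) IH unfolding A1_def A2_def by simp
  also have "\<dots> = card (A1 \<union> A2)" using card_Un_disjoint[OF fin_A(1,2) disj] by simp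
  also have "\<dots> \<le> card A" using card_mono[OF fin_A(3) sub] .
  finally show ?case unfolding A_def by blast
qed

lemma parking_fn_level_bound:
  assumes f: "f \<in> parking_fns"
  shows "(\<Sum>v\<in>V - {s}. f v) + (card V - 1) + minfas E tail head \<le> card E"
proof -
  obtain pos :: "'v \<Rightarrow> nat" where pos: "(\<Sum>v\<in>V-{s}. f v) + card (V-{s}) \<le>
     card {e\<in>E. head e \<in> V-{s} \<and> (tail e \<notin> V-{s} \<or> pos (tail e) < pos (head e))}"
    using parking_fn_forward_arcs_bound[OF f, of "V - {s}"] by auto
  define pos_s where "pos_s = (\<lambda>u. if u = s then 0 else pos u + 1)"
  have "card {e\<in>E. head e \<in> V-{s} \<and> (tail e \<notin> V-{s} \<or> pos (tail e) < pos (head e))}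
     \<le> card (forward_arcs pos_s)"
    unfolding forward_arcs_def pos_s_def using finite_E tail_in_V by (intro card_mono) auto
  then show ?thesis
    using pos card_V_minus_root card_backward_arcs_plus_forward_arcs[of pos_s]
      minfas_le_backward_arcs[of pos_s] by linarith
qed

text \<open>In a set \<open>S\<close>, the \<open>pos\<close>-minimal vertex has all its forward in-arcs coming from outside \<open>S\<close>.\<close>

lemma forward_in_degree_parking_fn:
  fixes pos :: "'v \<Rightarrow> nat"
  assumes in_arc: "\<forall>v\<in>V - {s}. \<exists>e\<in>E. head e = v \<and> pos (tail e) < pos v"
  defines "c v \<equiv> card {e\<in>E. head e = v \<and> pos (tail e) < pos v}"
  shows "(\<lambda>v. if v \<in> V - {s} then c v - 1 else 0) \<in> parking_fns"
  unfolding parking_functions_def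
proof (intro CollectI conjI allI impI)
  fix S assume S: "S \<subseteq> V - {s} \<and> S \<noteq> {}"
  have fin: "finite S" using S finite_V finite_subset by blast
  have "Min (pos ` S) \<in> pos ` S" using fin S by (intro Min_in) auto
  then obtain v where "v \<in> S" "pos v = Min (pos ` S)" by auto
  then have v: "v \<in> S" "\<forall>u\<in>S. pos v \<le> pos u" using fin by auto
  have "{e\<in>E. head e = v \<and> pos (tail e) < pos v} \<subseteq> {e\<in>E. head e = v \<and> tail e \<notin> S}"
    using v by force
  then have "c v \<le> card {e\<in>E. head e = v \<and> tail e \<notin> S}"
    unfolding c_def using finite_E by (intro card_mono) auto
  moreover have "c v \<ge> 1"
    using in_arc S v(1) finite_E unfolding c_def by (auto simp: Suc_le_eq card_gt_0_iff)
  ultimately show "\<exists>v\<in>S. (if v \<in> V - {s} then c v - 1 else 0) < card {e\<in>E. head e = v \<and> tail e \<notin> S}"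
    using v(1) S by (intro bexI[of _ v]) auto
qed auto

lemma forward_in_degree_level:
  fixes pos :: "'v \<Rightarrow> nat"
  assumes in_arc: "\<forall>v\<in>V - {s}. \<exists>e\<in>E. head e = v \<and> pos (tail e) < pos v"
    and root_first: "\<forall>v\<in>V - {s}. pos s < pos v"
  defines "c v \<equiv> card {e\<in>E. head e = v \<and> pos (tail e) < pos v}"
  shows "(\<Sum>v\<in>V - {s}. c v - 1) + (card V - 1) = card (forward_arcs pos)"
proof -
  have ge1: "c v \<ge> 1" if "v \<in> V - {s}" for v
    using in_arc that finite_E unfolding c_def by (auto simp: Suc_le_eq card_gt_0_iff)
  have "(\<Sum>v\<in>V - {s}. c v - 1) + card (V - {s}) = (\<Sum>v\<in>V - {s}. c v - 1 + 1)"
    by (subst sum.distrib) simp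
  also have "\<dots> = (\<Sum>v\<in>V - {s}. c v)"
  proof (rule sum.cong)
    fix v assume "v \<in> V - {s}"
    then have "c v \<ge> 1" by (rule ge1)
    then show "c v - 1 + 1 = c v" by simp
  qed simp
  also have "\<dots> = card {e\<in>E. head e \<in> V - {s} \<and> pos (tail e) < pos (head e)}"
  proof -
    have "{e\<in>E. head e \<in> V - {s} \<and> pos (tail e) < pos (head e)} =
        (\<Union>v\<in>V - {s}. {e\<in>E. head e = v \<and> pos (tail e) < pos v})" by auto
    moreover have "card (\<Union>v\<in>V - {s}. {e\<in>E. head e = v \<and> pos (tail e) < pos v}) = (\<Sum>v\<in>V - {s}. c v)"
      unfolding c_def by (rule card_UN_disjoint) (use finite_V finite_E in auto)
    ultimately show ?thesis by simp
  qed
  also have "{e\<in>E. head e \<in> V - {s} \<and> pos (tail e) < pos (head e)} = forward_arcs pos"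
  proof -
    have "head e \<noteq> s" if "e \<in> E" "pos (tail e) < pos (head e)" for e
    proof
      assume "head e = s"
      moreover have "tail e \<in> V" using that tail_in_V by simp
      ultimately show False using root_first that(2) by (metis DiffI less_asym singletonD)
    qed
    then show ?thesis unfolding forward_arcs_def using head_in_V by auto
  qed
  finally show ?thesis using card_V_minus_root by simp
qed

section \<open>A greedy search for branchings\<close>

text \<open>The pair \<open>(R, T)\<close> consists of the vertices reached so far and the arcs used to reach them.
  The list \<open>es\<close> plays the role of the fixed arc order relative to which the greedoid polynomial is
  expanded over branchings.\<close>

definition candidate_arcs :: "'e list \<Rightarrow> 'e set \<Rightarrow> 'v set \<Rightarrow> 'e list" where
  "candidate_arcs es A R = filter (\<lambda>e. e \<in> A \<and> tail e \<in> R \<and> head e \<notin> R) es"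

definition search_step :: "'e list \<Rightarrow> 'e set \<Rightarrow> 'v set \<times> 'e set \<Rightarrow> 'v set \<times> 'e set" where
  "search_step es A P = (case candidate_arcs es A (fst P) of
      [] \<Rightarrow> P
    | e # _ \<Rightarrow> (insert (head e) (fst P), insert e (snd P)))"

primrec search :: "'e list \<Rightarrow> 'e set \<Rightarrow> nat \<Rightarrow> 'v set \<times> 'e set" where
  "search es A 0 = ({s}, {})"
| "search es A (Suc k) = search_step es A (search es A k)"

definition search_invariant :: "'e set \<Rightarrow> 'v set \<times> 'e set \<Rightarrow> bool" where
  "search_invariant A P \<longleftrightarrow> s \<in> fst P \<and> fst P \<subseteq> V \<and> snd P \<subseteq> A \<and> head ` snd P = fst P - {s} \<and>
     inj_on head (snd P) \<and> (\<forall>v\<in>fst P. (s, v) \<in> (arcrel (snd P) tail head)\<^sup>*)"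

lemma candidate_arcs_ConsD:
  "candidate_arcs es A R = e # r \<Longrightarrow> e \<in> A \<and> tail e \<in> R \<and> head e \<notin> R \<and> e \<in> set es"
proof -
  assume "candidate_arcs es A R = e # r"
  then have "e \<in> set (candidate_arcs es A R)" by simp
  then show ?thesis unfolding candidate_arcs_def by simp
qed

lemma candidate_arcs_nonempty:
  "e \<in> A \<Longrightarrow> tail e \<in> R \<Longrightarrow> head e \<notin> R \<Longrightarrow> e \<in> set es \<Longrightarrow> candidate_arcs es A R \<noteq> []"
  unfolding candidate_arcs_def by (auto simp: filter_empty_conv)

lemma search_invariant_step:
  assumes A: "A \<subseteq> E" and I: "search_invariant A P"
  shows "search_invariant A (search_step es A P)"
proof (cases "candidate_arcs es A (fst P)")
  case Nil then show ?thesis using I unfolding search_step_def by simp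
next
  case (Cons e r)
  obtain R T where P: "P = (R, T)" by (cases P)
  have e: "e \<in> A" "tail e \<in> R" "head e \<notin> R" using candidate_arcs_ConsD[OF Cons] P by auto
  have step: "search_step es A P = (insert (head e) R, insert e T)"
    unfolding search_step_def using Cons P by simp
  have IR: "s \<in> R" "R \<subseteq> V" "T \<subseteq> A" "head ` T = R - {s}" "inj_on head T"
    and reach: "\<forall>v\<in>R. (s, v) \<in> (arcrel T tail head)\<^sup>*"
    using I P unfolding search_invariant_def by auto
  have mono: "(arcrel T tail head)\<^sup>* \<subseteq> (arcrel (insert e T) tail head)\<^sup>*"
    by (rule rtrancl_mono[OF arcrel_mono]) auto
  have "(s, tail e) \<in> (arcrel (insert e T) tail head)\<^sup>*" using reach e mono by auto
  moreover have "(tail e, head e) \<in> arcrel (insert e T) tail head" unfolding arcrel_def by auto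
  ultimately have "(s, head e) \<in> (arcrel (insert e T) tail head)\<^sup>*" by (rule rtrancl_into_rtrancl)
  then have reach': "\<forall>v\<in>insert (head e) R. (s, v) \<in> (arcrel (insert e T) tail head)\<^sup>*"
    using reach mono by auto
  have "head e \<noteq> s" using IR(1) e(3) by auto
  then have heads: "head ` insert e T = insert (head e) R - {s}" using IR(4) by auto
  have inj: "inj_on head (insert e T)" using IR(4,5) e(3) by auto
  have "head e \<in> V" using e(1) A head_in_V by auto
  then show ?thesis
    unfolding search_invariant_def step fst_conv snd_conv
    using IR e(1) reach' heads inj by (intro conjI) auto
qed

lemma search_invariant: "A \<subseteq> E \<Longrightarrow> search_invariant A (search es A k)"
proof (induction k)
  case 0 then show ?case unfolding search_invariant_def using root_in_V by simp
next
  case (Suc k) then show ?case using search_invariant_step by simp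
qed

lemma search_step_mono: "fst P \<subseteq> fst (search_step es A P) \<and> snd P \<subseteq> snd (search_step es A P)"
  unfolding search_step_def by (auto split: list.split)

lemma search_mono:
  "j \<le> k \<Longrightarrow> fst (search es A j) \<subseteq> fst (search es A k) \<and> snd (search es A j) \<subseteq> snd (search es A k)"
proof (induction k)
  case (Suc k)
  show ?case
  proof (cases "j = Suc k")
    case False
    then have "j \<le> k" using Suc.prems by simp
    then show ?thesis using Suc.IH search_step_mono[of "search es A k" es A] by auto
  qed simp
qed simp

lemma search_step_fst: "fst (search_step es A P) = fst P \<or> (\<exists>e. fst (search_step es A P) = insert (head e) (fst P))"
  unfolding search_step_def by (auto split: list.split)

lemma search_picks_candidate:
  "e \<in> snd (search es A k) \<Longrightarrow> \<exists>j<k. tail e \<in> fst (search es A j) \<and> head e \<notin> fst (search es A j)"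
proof (induction k)
  case (Suc k)
  show ?case
  proof (cases "e \<in> snd (search es A k)")
    case True then show ?thesis using Suc.IH by (meson less_SucI)
  next
    case False
    show ?thesis
    proof (cases "candidate_arcs es A (fst (search es A k))")
      case Nil then show ?thesis using Suc.prems False by (simp add: search_step_def)
    next
      case (Cons e' r)
      then have "e = e'" using Suc.prems False by (simp add: search_step_def)
      then show ?thesis using candidate_arcs_ConsD[OF Cons] by blast
    qed
  qed
qed simp

lemma search_reaches_at_step:
  assumes "v \<in> fst (search es A N)" "v \<noteq> s"
  shows "\<exists>j<N. v \<notin> fst (search es A j) \<and> fst (search es A (Suc j)) = insert v (fst (search es A j))"
  using assms(1)
proof (induction N)
  case 0 then show ?case using assms(2) by simp
next
  case (Suc N)
  show ?case
  proof (cases "v \<in> fst (search es A N)")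
    case True then show ?thesis using Suc.IH by (meson less_SucI)
  next
    case False
    from search_step_fst[of es A "search es A N"] show ?thesis
    proof
      assume "fst (search_step es A (search es A N)) = fst (search es A N)"
      then show ?thesis using Suc.prems False by simp
    next
      assume "\<exists>e. fst (search_step es A (search es A N)) = insert (head e) (fst (search es A N))"
      then obtain e where e: "fst (search es A (Suc N)) = insert (head e) (fst (search es A N))" by auto
      then have "v = head e" using Suc.prems False by auto
      then show ?thesis using e False by (intro exI[of _ N]) auto
    qed
  qed
qed

definition search_spans :: "'e list \<Rightarrow> 'e set \<Rightarrow> bool" where
  "search_spans es A \<longleftrightarrow> fst (search es A (card V - 1)) = V"

definition search_tree :: "'e list \<Rightarrow> 'e set \<Rightarrow> 'e set" where
  "search_tree es A = snd (search es A (card V - 1))"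

lemma search_spansI:
  assumes A: "A \<subseteq> E" and es: "E \<subseteq> set es"
    and leaving: "\<forall>R. s \<in> R \<and> R \<subseteq> V \<and> R \<noteq> V \<longrightarrow> (\<exists>e\<in>A. tail e \<in> R \<and> head e \<notin> R)"
  shows "search_spans es A"
proof -
  have "k \<le> card V - 1 \<Longrightarrow> card (fst (search es A k)) = Suc k" for k
  proof (induction k)
    case (Suc k)
    let ?R = "fst (search es A k)"
    have I: "search_invariant A (search es A k)" by (rule search_invariant[OF A])
    have R: "card ?R = Suc k" "finite ?R" using Suc I finite_V finite_subset
      unfolding search_invariant_def by auto
    have "?R \<noteq> V" "s \<in> ?R" "?R \<subseteq> V" using R Suc.prems I unfolding search_invariant_def by auto
    then obtain e where e: "e \<in> A" "tail e \<in> ?R" "head e \<notin> ?R" using leaving by blast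
    have "e \<in> set es" using e(1) A es by blast
    with candidate_arcs_nonempty[OF e] obtain e' r where C: "candidate_arcs es A ?R = e' # r"
      by (cases "candidate_arcs es A ?R") auto
    then have "head e' \<notin> ?R" using candidate_arcs_ConsD by blast
    then show ?case using C R by (simp add: search_step_def)
  qed simp
  then have "card (fst (search es A (card V - 1))) = card V" using card_V_pos by simp
  moreover have "fst (search es A (card V - 1)) \<subseteq> V"
    using search_invariant[OF A] unfolding search_invariant_def by blast
  ultimately show ?thesis unfolding search_spans_def using finite_V card_subset_eq by blast
qed

lemma search_tree_subset: "A \<subseteq> E \<Longrightarrow> search_tree es A \<subseteq> A"
  using search_invariant unfolding search_invariant_def search_tree_def by blast

lemma branching_search_tree:
  assumes A: "A \<subseteq> E" and spans: "search_spans es A"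
  shows "branching E tail head s (search_tree es A)" "card (search_tree es A) = card V - 1"
proof -
  let ?P = "search es A (card V - 1)"
  have I: "snd ?P \<subseteq> A" "head ` snd ?P = fst ?P - {s}" "inj_on head (snd ?P)"
    "\<forall>v\<in>fst ?P. (s, v) \<in> (arcrel (snd ?P) tail head)\<^sup>*"
    using search_invariant[OF A] unfolding search_invariant_def by auto
  then show "branching E tail head s (search_tree es A)"
    using A unfolding branching_def search_tree_def by blast
  have "card (search_tree es A) = card (head ` search_tree es A)"
    using I(3) unfolding search_tree_def by (simp add: card_image)
  also have "head ` search_tree es A = V - {s}" using I(2) spans unfolding search_tree_def search_spans_def by simp
  finally show "card (search_tree es A) = card V - 1" using card_V_minus_root by simp
qed

abbreviation rank :: "'e set \<Rightarrow> nat" where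
  "rank A \<equiv> branching_rank E tail head s A"

lemma branching_heads:
  assumes "branching E tail head s B"
  shows "head ` B \<subseteq> V - {s}" "card B = card (head ` B)"
proof -
  show "head ` B \<subseteq> V - {s}" using assms head_in_V unfolding branching_def by auto
  show "card B = card (head ` B)" using assms unfolding branching_def by (simp add: card_image)
qed

lemma card_branching_le:
  assumes "branching E tail head s B"
  shows "card B \<le> card V - 1"
proof -
  have "card (head ` B) \<le> card (V - {s})"
    using branching_heads(1)[OF assms] finite_V by (intro card_mono) auto
  then show ?thesis using branching_heads(2)[OF assms] card_V_minus_root by simp
qed

lemma finite_branchings_in: "A \<subseteq> E \<Longrightarrow> finite {B. B \<subseteq> A \<and> branching E tail head s B}"
proof (rule finite_subset)
  show "{B. B \<subseteq> A \<and> branching E tail head s B} \<subseteq> Pow A" by auto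
qed (use finite_E finite_subset in blast)

lemma branching_empty: "branching E tail head s {}"
  unfolding branching_def by simp

lemma rank_le: "A \<subseteq> E \<Longrightarrow> rank A \<le> card V - 1"
  unfolding branching_rank_def
  using finite_branchings_in branching_empty card_branching_le by (subst Max_le_iff) auto

lemma rank_eq_if_search_spans:
  assumes A: "A \<subseteq> E" and spans: "search_spans es A"
  shows "rank A = card V - 1"
proof (rule antisym)
  show "rank A \<le> card V - 1" by (rule rank_le[OF A])
  have "card (search_tree es A) \<in> card ` {B. B \<subseteq> A \<and> branching E tail head s B}"
    using branching_search_tree[OF A spans] search_tree_subset[OF A] by blast
  then have "card (search_tree es A) \<le> rank A"
    unfolding branching_rank_def using finite_branchings_in[OF A] by (intro Max_ge) auto
  then show "card V - 1 \<le> rank A" using branching_search_tree(2)[OF A spans] by simp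
qed

lemma search_spans_if_rank_eq:
  assumes A: "A \<subseteq> E" and es: "E \<subseteq> set es" and rank: "rank A = card V - 1"
  shows "search_spans es A"
proof -
  have "rank A \<in> card ` {B. B \<subseteq> A \<and> branching E tail head s B}"
    unfolding branching_rank_def using finite_branchings_in[OF A] branching_empty by (intro Max_in) auto
  then obtain B where B: "B \<subseteq> A" "branching E tail head s B" "card B = card V - 1" using rank by auto
  have heads: "head ` B = V - {s}"
  proof -
    have "card (head ` B) = card (V - {s})" using branching_heads(2)[OF B(2)] B(3) card_V_minus_root by simp
    then show ?thesis using branching_heads(1)[OF B(2)] finite_V card_subset_eq by (metis finite_Diff)
  qed
  show ?thesis
  proof (rule search_spansI[OF A es], intro allI impI)
    fix R assume R: "s \<in> R \<and> R \<subseteq> V \<and> R \<noteq> V"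
    then obtain v where v: "v \<in> V" "v \<notin> R" by blast
    then have "v \<in> head ` B" using heads R by auto
    then have "(s, v) \<in> (arcrel B tail head)\<^sup>*" using B(2) unfolding branching_def by auto
    from rtrancl_crosses_boundary[OF this, of R] R v obtain a c where
      "(a, c) \<in> arcrel B tail head" "a \<in> R" "c \<notin> R" by blast
    then show "\<exists>e\<in>A. tail e \<in> R \<and> head e \<notin> R" using B(1) unfolding arcrel_def by blast
  qed
qed

section \<open>Fibers of the search tree\<close>

definition spanning_sets :: "'e list \<Rightarrow> 'e set set" where
  "spanning_sets es = {A. A \<subseteq> E \<and> search_spans es A}"

definition tree_fiber :: "'e list \<Rightarrow> 'e set \<Rightarrow> 'e set set" where
  "tree_fiber es T = {A \<in> spanning_sets es. search_tree es A = T}"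

definition fiber_top :: "'e list \<Rightarrow> 'e set \<Rightarrow> 'e set" where
  "fiber_top es T = \<Union> (tree_fiber es T)"

lemma finite_spanning_sets: "finite (spanning_sets es)"
proof (rule finite_subset)
  show "spanning_sets es \<subseteq> Pow E" unfolding spanning_sets_def by auto
qed (simp add: finite_E)

lemma finite_tree_fiber: "finite (tree_fiber es T)"
  using finite_spanning_sets unfolding tree_fiber_def by simp

lemma tree_fiber_subset_E: "A \<in> tree_fiber es T \<Longrightarrow> A \<subseteq> E"
  unfolding tree_fiber_def spanning_sets_def by auto

lemma tree_subset_tree_fiber: "A \<in> tree_fiber es T \<Longrightarrow> T \<subseteq> A"
  unfolding tree_fiber_def spanning_sets_def using search_tree_subset by auto

lemma search_eq_if_picks_in:
  assumes A: "A \<subseteq> E" and picks: "snd (search es A N) \<subseteq> B" and B: "B \<subseteq> A"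
  shows "k \<le> N \<Longrightarrow> search es B k = search es A k"
proof (induction k)
  case (Suc k)
  let ?P = "search es A k"
  have restrict: "candidate_arcs es B (fst ?P) = filter (\<lambda>e. e \<in> B) (candidate_arcs es A (fst ?P))"
    unfolding candidate_arcs_def filter_filter using B by (intro filter_cong) auto
  show ?case
  proof (cases "candidate_arcs es A (fst ?P)")
    case Nil
    then show ?thesis using Suc restrict by (simp add: search_step_def)
  next
    case (Cons e r)
    have "snd (search_step es A ?P) \<subseteq> snd (search es A N)"
      using search_mono[OF Suc.prems, of es A] by simp
    moreover have "e \<in> snd (search_step es A ?P)" unfolding search_step_def using Cons by simp
    ultimately have "e \<in> B" using picks by blast
    then have "candidate_arcs es B (fst ?P) = e # filter (\<lambda>e. e \<in> B) r" using restrict Cons by simp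
    then show ?thesis using Suc Cons by (simp add: search_step_def)
  qed
qed simp

lemma search_eq_on_tree_fiber:
  assumes "A \<in> tree_fiber es T" "k \<le> card V - 1"
  shows "search es T k = search es A k"
proof -
  have "A \<subseteq> E" "search_tree es A = T" using assms(1) unfolding tree_fiber_def spanning_sets_def by auto
  then show ?thesis
    using search_eq_if_picks_in[of A es "card V - 1" T k] tree_subset_tree_fiber[OF assms(1)] assms(2)
    unfolding search_tree_def by simp
qed

lemma mem_tree_fiberI:
  assumes "T \<in> tree_fiber es T" "A \<subseteq> E" "search es A (card V - 1) = search es T (card V - 1)"
  shows "A \<in> tree_fiber es T"
  using assms unfolding tree_fiber_def spanning_sets_def search_spans_def search_tree_def by simp

lemma tree_in_tree_fiber:
  assumes A: "A \<in> tree_fiber es T"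
  shows "T \<in> tree_fiber es T"
proof -
  have "T \<subseteq> E" using tree_subset_tree_fiber[OF A] tree_fiber_subset_E[OF A] by blast
  moreover have "search es T (card V - 1) = search es A (card V - 1)"
    using search_eq_on_tree_fiber[OF A] by simp
  ultimately show ?thesis
    using A unfolding tree_fiber_def spanning_sets_def search_spans_def search_tree_def by simp
qed

lemma search_tree_in_tree_fiber:
  assumes "T \<in> search_tree es ` spanning_sets es"
  shows "T \<in> tree_fiber es T"
proof -
  obtain A where "A \<in> spanning_sets es" "T = search_tree es A" using assms by blast
  then have "A \<in> tree_fiber es T" unfolding tree_fiber_def by simp
  then show ?thesis by (rule tree_in_tree_fiber)
qed

lemma search_step_Un:
  assumes heads: "head ` snd P \<subseteq> fst P" and same: "search_step es A1 P = search_step es A2 P"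
  shows "search_step es (A1 \<union> A2) P = search_step es A1 P"
proof -
  define C1 where "C1 = (\<lambda>e. e \<in> A1 \<and> tail e \<in> fst P \<and> head e \<notin> fst P)"
  define C2 where "C2 = (\<lambda>e. e \<in> A2 \<and> tail e \<in> fst P \<and> head e \<notin> fst P)"
  have cand: "candidate_arcs es (A1 \<union> A2) (fst P) = filter (\<lambda>e. C1 e \<or> C2 e) es"
    "candidate_arcs es A1 (fst P) = filter C1 es" "candidate_arcs es A2 (fst P) = filter C2 es"
    unfolding candidate_arcs_def C1_def C2_def by (auto intro: filter_cong)
  show ?thesis
  proof (cases "filter C1 es")
    case Nil
    then have "search_step es A1 P = P" using cand by (simp add: search_step_def)
    then have "search_step es A2 P = P" using same by simp
    have "filter C2 es = []"
    proof (rule ccontr)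
      assume "filter C2 es \<noteq> []"
      then obtain e r where C: "filter C2 es = e # r" by (cases "filter C2 es") auto
      then have "head e \<notin> fst P" using candidate_arcs_ConsD[of es A2 "fst P" e r] cand by simp
      moreover have "fst (search_step es A2 P) = insert (head e) (fst P)"
        using C cand by (simp add: search_step_def)
      ultimately show False using \<open>search_step es A2 P = P\<close> by auto
    qed
    then have "search_step es (A1 \<union> A2) P = P" using Nil cand by (simp add: search_step_def filter_empty_conv)
    then show ?thesis using \<open>search_step es A1 P = P\<close> by simp
  next
    case (Cons e1 r1)
    have "head e1 \<notin> fst P" using candidate_arcs_ConsD[of es A1 "fst P" e1 r1] Cons cand by simp
    moreover have "fst (search_step es A1 P) = insert (head e1) (fst P)"
      using Cons cand by (simp add: search_step_def)
    ultimately have "search_step es A1 P \<noteq> P" by auto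
    then obtain e2 r2 where Cons2: "filter C2 es = e2 # r2"
      using same cand by (cases "filter C2 es") (auto simp: search_step_def)
    have "insert e1 (snd P) = insert e2 (snd P)" using same Cons Cons2 cand by (simp add: search_step_def)
    moreover have "head e2 \<notin> fst P" using candidate_arcs_ConsD[of es A2 "fst P" e2 r2] Cons2 cand by simp
    ultimately have "e1 = e2" using \<open>head e1 \<notin> fst P\<close> heads by blast
    moreover have "e1 \<in> set (filter C1 es)" using Cons by simp
    then have "filter (\<lambda>e. C1 e \<or> C2 e) es \<noteq> []" by (auto simp: filter_empty_conv)
    ultimately obtain r where "filter (\<lambda>e. C1 e \<or> C2 e) es = e1 # r"
      using hd_filter_disj[of C1 C2 es] Cons Cons2 by (metis list.collapse list.sel(1))
    then show ?thesis using Cons cand by (simp add: search_step_def)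
  qed
qed

lemma search_Un:
  assumes A1: "A1 \<subseteq> E"
    and eq1: "\<forall>k\<le>N. search es A1 k = search es C k" and eq2: "\<forall>k\<le>N. search es A2 k = search es C k"
  shows "k \<le> N \<Longrightarrow> search es (A1 \<union> A2) k = search es C k"
proof (induction k)
  case (Suc k)
  let ?P = "search es C k"
  have "search_step es A1 ?P = search es C (Suc k)" "search_step es A2 ?P = search es C (Suc k)"
    using eq1 eq2 Suc.prems by (metis Suc_leD search.simps(2))+
  moreover have "head ` snd ?P \<subseteq> fst ?P"
    using search_invariant[OF A1, of es k] eq1 Suc.prems unfolding search_invariant_def by auto
  ultimately show ?case using search_step_Un[of ?P es A1 A2] Suc by simp
qed simp

lemma fiber_top_in_tree_fiber:
  assumes T: "T \<in> tree_fiber es T"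
  shows "fiber_top es T \<in> tree_fiber es T"
proof -
  have "finite F \<Longrightarrow> F \<noteq> {} \<Longrightarrow> F \<subseteq> tree_fiber es T \<Longrightarrow>
      \<forall>k\<le>card V - 1. search es (\<Union>F) k = search es T k" for F
  proof (induction F rule: finite_ne_induct)
    case (singleton A) then show ?case using search_eq_on_tree_fiber by simp
  next
    case (insert A F)
    then have A: "A \<in> tree_fiber es T" and "F \<subseteq> tree_fiber es T" by auto
    then have "\<Union>F \<subseteq> E" using tree_fiber_subset_E by blast
    moreover have "\<forall>k\<le>card V - 1. search es A k = search es T k"
      using search_eq_on_tree_fiber[OF A] by simp
    ultimately show ?case
      using search_Un[OF tree_fiber_subset_E[OF A], of "card V - 1" es T "\<Union>F"] insert by simp
  qed
  then have "\<forall>k\<le>card V - 1. search es (fiber_top es T) k = search es T k"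
    unfolding fiber_top_def using finite_tree_fiber T by blast
  moreover have "fiber_top es T \<subseteq> E" unfolding fiber_top_def using tree_fiber_subset_E by blast
  ultimately show ?thesis using mem_tree_fiberI[OF T] by blast
qed

lemma tree_fiber_eq_interval:
  assumes T: "T \<in> tree_fiber es T"
  shows "tree_fiber es T = {A. T \<subseteq> A \<and> A \<subseteq> fiber_top es T}"
proof (intro set_eqI iffI)
  fix A assume "A \<in> tree_fiber es T"
  then show "A \<in> {A. T \<subseteq> A \<and> A \<subseteq> fiber_top es T}"
    using tree_subset_tree_fiber unfolding fiber_top_def by blast
next
  fix A assume A: "A \<in> {A. T \<subseteq> A \<and> A \<subseteq> fiber_top es T}"
  have top: "fiber_top es T \<in> tree_fiber es T" by (rule fiber_top_in_tree_fiber[OF T])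
  then have "fiber_top es T \<subseteq> E" "search_tree es (fiber_top es T) = T"
    using tree_fiber_subset_E unfolding tree_fiber_def by auto
  then have "search es A (card V - 1) = search es (fiber_top es T) (card V - 1)"
    using search_eq_if_picks_in[of "fiber_top es T" es "card V - 1" A] A unfolding search_tree_def by auto
  also have "\<dots> = search es T (card V - 1)" using search_eq_on_tree_fiber[OF top] by simp
  finally show "A \<in> tree_fiber es T"
    using mem_tree_fiberI[OF T] A \<open>fiber_top es T \<subseteq> E\<close> by auto
qed

lemma sum_tree_fiber:
  assumes T: "T \<in> tree_fiber es T"
  shows "(\<Sum>A\<in>tree_fiber es T. [:-1, 1::int:] ^ (card A - (card V - 1))) = monom 1 (card (fiber_top es T - T))"
proof -
  let ?D = "fiber_top es T - T"
  have "fiber_top es T \<subseteq> E" using fiber_top_in_tree_fiber[OF T] tree_fiber_subset_E by blast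
  then have fin_top: "finite (fiber_top es T)" using finite_E finite_subset by blast
  have T_top: "T \<subseteq> fiber_top es T" using T unfolding fiber_top_def by blast
  have fin_T: "finite T" using T_top fin_top finite_subset by blast
  have "T \<subseteq> E" "search_spans es T" "search_tree es T = T"
    using T unfolding tree_fiber_def spanning_sets_def by auto
  then have card_T: "card T = card V - 1" using branching_search_tree(2)[of T es] by simp
  have "tree_fiber es T = (\<lambda>D. T \<union> D) ` Pow ?D"
    unfolding tree_fiber_eq_interval[OF T] using T_top by (auto intro!: image_eqI[where x = "_ - T"])
  moreover have "inj_on (\<lambda>D. T \<union> D) (Pow ?D)" by (rule inj_onI) blast
  ultimately have "(\<Sum>A\<in>tree_fiber es T. [:-1, 1::int:] ^ (card A - (card V - 1))) =
      (\<Sum>D\<in>Pow ?D. [:-1, 1::int:] ^ (card (T \<union> D) - (card V - 1)))"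
    by (simp add: sum.reindex)
  also have "\<dots> = (\<Sum>D\<in>Pow ?D. [:-1, 1::int:] ^ card D)"
  proof (rule sum.cong)
    fix D assume "D \<in> Pow ?D"
    then have "card (T \<union> D) = card T + card D"
      using fin_T fin_top finite_subset by (intro card_Un_disjoint) auto
    then show "[:-1, 1::int:] ^ (card (T \<union> D) - (card V - 1)) = [:-1, 1::int:] ^ card D"
      using card_T by simp
  qed simp
  also have "\<dots> = ([:-1, 1::int:] + 1) ^ card ?D" using fin_top by (simp add: sum_Pow_power_card)
  also have "\<dots> = monom 1 (card ?D)" by (simp add: one_pCons monom_altdef)
  finally show ?thesis .
qed

lemma arc_outside_fiber_top_crosses:
  assumes T: "T \<in> tree_fiber es T" and e: "e \<in> E - (fiber_top es T - T)"
  shows "\<exists>j<card V - 1. tail e \<in> fst (search es T j) \<and> head e \<notin> fst (search es T j)"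
proof (cases "e \<in> T")
  case True
  moreover have "search_tree es T = T" using T unfolding tree_fiber_def by simp
  ultimately show ?thesis using search_picks_candidate unfolding search_tree_def by blast
next
  case False
  show ?thesis
  proof (rule ccontr)
    assume no_cross: "\<not> ?thesis"
    have "search es (insert e T) k = search es T k" if "k \<le> card V - 1" for k
      using that
    proof (induction k)
      case (Suc k)
      then have "candidate_arcs es (insert e T) (fst (search es T k)) = candidate_arcs es T (fst (search es T k))"
        using no_cross unfolding candidate_arcs_def by (intro filter_cong) auto
      then show ?case using Suc by (simp add: search_step_def)
    qed simp
    then have "insert e T \<in> tree_fiber es T"
      using mem_tree_fiberI[OF T] e tree_fiber_subset_E[OF T] by blast
    then show False using False e unfolding fiber_top_def by blast
  qed
qed

text \<open>Ranking the vertices by the step at which the search reaches them makes every arc outside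
  \<open>fiber_top es T - T\<close> forward.\<close>

lemma minfas_le_card_fiber_top_diff:
  assumes T: "T \<in> tree_fiber es T"
  shows "minfas E tail head \<le> card (fiber_top es T - T)"
proof -
  let ?N = "card V - 1"
  define R where "R j = fst (search es T j)" for j
  have spans: "R ?N = V" using T unfolding tree_fiber_def spanning_sets_def search_spans_def R_def by auto
  define \<tau> where "\<tau> v = (LEAST k. v \<in> R k)" for v
  have "\<tau> (tail e) < \<tau> (head e)" if e: "e \<in> E - (fiber_top es T - T)" for e
  proof -
    obtain j where j: "j < ?N" "tail e \<in> R j" "head e \<notin> R j"
      using arc_outside_fiber_top_crosses[OF T e] unfolding R_def by blast
    have "\<tau> (tail e) \<le> j" unfolding \<tau>_def using j(2) by (rule Least_le)
    moreover have "head e \<in> R (\<tau> (head e))" unfolding \<tau>_def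
      by (rule LeastI[of _ ?N]) (use spans e head_in_V in auto)
    then have "\<not> \<tau> (head e) \<le> j" using j(3) search_mono unfolding R_def by blast
    ultimately show ?thesis by simp
  qed
  then have "\<not> has_dicycle (E - (fiber_top es T - T)) tail head"
    by (intro increasing_arcs_acyclic[of _ \<tau>]) blast
  moreover have "fiber_top es T - T \<subseteq> E"
    using fiber_top_in_tree_fiber[OF T] tree_fiber_subset_E by blast
  ultimately have "feedback_arc_set E tail head (fiber_top es T - T)"
    unfolding feedback_arc_set_def by blast
  then show ?thesis by (rule minfas_le)
qed

lemma candidate_arcs_insert_front:
  assumes es: "es = nt @ ts" and e: "e \<in> set nt" and B: "B \<subseteq> set ts" and disj: "set nt \<inter> set ts = {}"
    and cross: "tail e \<in> R" "head e \<notin> R"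
  shows "\<exists>r. candidate_arcs es (insert e B) R = e # r"
proof -
  let ?C = "\<lambda>x. x \<in> insert e B \<and> tail x \<in> R \<and> head x \<notin> R"
  have "e \<in> set (filter ?C nt)" using cross e by simp
  then have ne: "filter ?C nt \<noteq> []" by (metis empty_iff list.set(1))
  have "set (filter ?C nt) \<subseteq> {e}" using B disj by auto
  then have "hd (filter ?C nt) = e" using ne by (meson hd_in_set singletonD subsetD)
  then have "filter ?C nt = e # tl (filter ?C nt)" using ne by (metis list.collapse)
  then have "candidate_arcs es (insert e B) R = e # tl (filter ?C nt) @ filter ?C ts"
    unfolding candidate_arcs_def es by simp
  then show ?thesis by blast
qed

lemma search_insert_unpicked_or_eq:
  assumes es: "es = nt @ ts" and e: "e \<in> set nt" and B: "B \<subseteq> set ts" and disj: "set nt \<inter> set ts = {}"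
  shows "search es (insert e B) k = search es B k \<or> e \<in> snd (search es (insert e B) k)"
proof (induction k)
  case (Suc k)
  show ?case
  proof (cases "e \<in> snd (search es (insert e B) k)")
    case True
    then show ?thesis using search_mono[of k "Suc k" es "insert e B"] by auto
  next
    case False
    then have eq: "search es (insert e B) k = search es B k" using Suc by simp
    define R where "R = fst (search es B k)"
    show ?thesis
    proof (cases "tail e \<in> R \<and> head e \<notin> R")
      case True
      then obtain r where "candidate_arcs es (insert e B) R = e # r"
        using candidate_arcs_insert_front[OF assms] by blast
      then show ?thesis using eq unfolding R_def by (simp add: search_step_def)
    next
      case False
      have "candidate_arcs es (insert e B) R = candidate_arcs es B R"
        unfolding candidate_arcs_def by (rule filter_cong) (use False in auto)
      then show ?thesis using eq unfolding R_def by (simp add: search_step_def)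
    qed
  qed
qed simp

lemma search_insert_front_picks:
  assumes es: "es = nt @ ts" and e: "e \<in> set nt" and B: "B \<subseteq> set ts" and disj: "set nt \<inter> set ts = {}"
    and cross: "tail e \<in> fst (search es B k)" "head e \<notin> fst (search es B k)"
  shows "e \<in> snd (search es (insert e B) (Suc k))"
proof (cases "e \<in> snd (search es (insert e B) k)")
  case True
  then show ?thesis using search_mono[of k "Suc k" es "insert e B"] by auto
next
  case False
  then have "search es (insert e B) k = search es B k"
    using search_insert_unpicked_or_eq[OF es e B disj] by blast
  moreover obtain r where "candidate_arcs es (insert e B) (fst (search es B k)) = e # r"
    using candidate_arcs_insert_front[OF es e B disj cross] by blast
  ultimately show ?thesis by (simp add: search_step_def)
qed

context
  fixes pos :: "'v \<Rightarrow> nat" and in_arc :: "'v \<Rightarrow> 'e"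
  assumes root_first: "\<forall>v\<in>V - {s}. pos s < pos v"
    and in_arc: "\<forall>v\<in>V - {s}. in_arc v \<in> E \<and> head (in_arc v) = v \<and> pos (tail (in_arc v)) < pos v"
begin

lemma in_arcs_subset_E: "in_arc ` (V - {s}) \<subseteq> E"
  using in_arc by auto

lemma card_in_arcs: "card (in_arc ` (V - {s})) = card V - 1"
proof -
  have "inj_on in_arc (V - {s})" by (rule inj_onI) (metis in_arc)
  then show ?thesis using card_image card_V_minus_root by metis
qed

lemma in_arc_leaving_min:
  assumes Q: "s \<in> Q" "Q \<subseteq> V" "Q \<noteq> V"
  shows "\<exists>e\<in>in_arc ` (V - {s}). tail e \<in> Q \<and> head e \<notin> Q \<and> (\<forall>v\<in>V - Q. pos (head e) \<le> pos v)"
proof -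
  have fin: "finite (V - Q)" using finite_V by simp
  have "V - Q \<noteq> {}" using Q by auto
  then have "Min (pos ` (V - Q)) \<in> pos ` (V - Q)" using fin by (intro Min_in) auto
  then obtain w where w: "w \<in> V - Q" "pos w = Min (pos ` (V - Q))" by auto
  then have min: "\<forall>v\<in>V - Q. pos w \<le> pos v" using fin by auto
  have w_V: "w \<in> V - {s}" using w Q by auto
  have "tail (in_arc w) \<in> Q"
  proof (rule ccontr)
    assume "tail (in_arc w) \<notin> Q"
    then have "tail (in_arc w) \<in> V - Q" using in_arc w_V tail_in_V by auto
    then have "pos w \<le> pos (tail (in_arc w))" using min by blast
    moreover have "pos (tail (in_arc w)) < pos w" using in_arc w_V by blast
    ultimately show False by simp
  qed
  then show ?thesis using in_arc w_V w(1) min by (intro bexI[of _ "in_arc w"]) auto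
qed

lemma search_in_arcs_spans:
  assumes "E \<subseteq> set es"
  shows "search_spans es (in_arc ` (V - {s}))"
proof (rule search_spansI[OF in_arcs_subset_E assms], intro allI impI)
  fix R assume "s \<in> R \<and> R \<subseteq> V \<and> R \<noteq> V"
  then show "\<exists>e\<in>in_arc ` (V - {s}). tail e \<in> R \<and> head e \<notin> R"
    using in_arc_leaving_min[of R] by blast
qed

lemma search_tree_in_arcs:
  assumes "E \<subseteq> set es"
  shows "search_tree es (in_arc ` (V - {s})) = in_arc ` (V - {s})"
proof -
  have "finite (in_arc ` (V - {s}))" using finite_V by simp
  then show ?thesis
    using search_tree_subset[OF in_arcs_subset_E] card_in_arcs
      branching_search_tree(2)[OF in_arcs_subset_E search_in_arcs_spans[OF assms]]
    by (metis card_subset_eq)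
qed

lemma search_in_arcs_increasing:
  assumes es: "es = nt @ ts" and ts: "set ts = in_arc ` (V - {s})" "sorted (map (\<lambda>e. pos (head e)) ts)"
    and nt: "set nt \<inter> set ts = {}"
  shows "\<forall>u\<in>fst (search es (set ts) k). \<forall>v\<in>V - fst (search es (set ts) k). pos u \<le> pos v"
proof (induction k)
  case 0 then show ?case using root_first by (auto intro: less_imp_le)
next
  case (Suc k)
  define R where "R = fst (search es (set ts) k)"
  have R: "s \<in> R" "R \<subseteq> V"
    using search_invariant[of "set ts" es k] in_arcs_subset_E ts unfolding R_def search_invariant_def by auto
  show ?case
  proof (cases "candidate_arcs es (set ts) R")
    case Nil then show ?thesis using Suc unfolding R_def by (simp add: search_step_def)
  next
    case (Cons t r)
    have next_R: "fst (search es (set ts) (Suc k)) = insert (head t) R"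
      using Cons unfolding R_def by (simp add: search_step_def)
    have t: "t \<in> set ts" "head t \<notin> R" using candidate_arcs_ConsD[OF Cons] by auto
    have first: "pos (head t) \<le> pos v" if v: "v \<in> V - R" for v
    proof -
      have "R \<noteq> V" using t in_arcs_subset_E ts head_in_V by blast
      then obtain e where e: "e \<in> set ts" "tail e \<in> R" "head e \<notin> R" "\<forall>v\<in>V - R. pos (head e) \<le> pos v"
        using in_arc_leaving_min[OF R] ts by blast
      have "candidate_arcs es (set ts) R = filter (\<lambda>e. e \<in> set ts \<and> tail e \<in> R \<and> head e \<notin> R) ts"
        unfolding candidate_arcs_def es using nt by (auto intro: filter_False)
      moreover have "e \<in> set (filter (\<lambda>e. e \<in> set ts \<and> tail e \<in> R \<and> head e \<notin> R) ts)" using e by simp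
      ultimately have "pos (head t) \<le> pos (head e)"
        using hd_filter_sorted_le[OF ts(2)] Cons by (metis list.sel(1))
      then show ?thesis using e(4)[rule_format, OF v] by linarith
    qed
    show ?thesis unfolding next_R
    proof (intro ballI)
      fix u v assume u: "u \<in> insert (head t) R" and "v \<in> V - insert (head t) R"
      then have v: "v \<in> V - R" by blast
      show "pos u \<le> pos v"
      proof (cases "u = head t")
        case True then show ?thesis using first[OF v] by simp
      next
        case False
        then have "u \<in> R" using u by blast
        then show ?thesis using Suc v unfolding R_def by blast
      qed
    qed
  qed
qed

text \<open>An arc in the fiber top of the tree was never picked; if it went forward, the search would
  pick it (it precedes the tree arcs in \<open>es\<close>) when its head is reached, changing the tree.\<close>

lemma fiber_top_in_arcs_backward:
  assumes es: "es = nt @ ts" and ts: "set ts = in_arc ` (V - {s})" "sorted (map (\<lambda>e. pos (head e)) ts)"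
    and nt: "set nt = E - set ts"
  shows "fiber_top es (set ts) - set ts \<subseteq> backward_arcs pos"
proof
  let ?T = "set ts"
  define R where "R k = fst (search es ?T k)" for k
  have es_E: "E \<subseteq> set es" using es nt by auto
  have disj: "set nt \<inter> set ts = {}" using nt by auto
  have T_fiber: "?T \<in> tree_fiber es ?T"
    using search_in_arcs_spans[OF es_E] search_tree_in_arcs[OF es_E] in_arcs_subset_E ts(1)
    unfolding tree_fiber_def spanning_sets_def by simp
  have increasing: "\<forall>u\<in>R k. \<forall>v\<in>V - R k. pos u \<le> pos v" for k
    using search_in_arcs_increasing[OF es ts disj] unfolding R_def by blast
  fix e assume e: "e \<in> fiber_top es ?T - ?T"
  then have eE: "e \<in> E" using fiber_top_in_tree_fiber[OF T_fiber] tree_fiber_subset_E by blast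
  show "e \<in> backward_arcs pos"
  proof (rule ccontr)
    assume "e \<notin> backward_arcs pos"
    then have forward: "pos (tail e) < pos (head e)" using eE unfolding backward_arcs_def by simp
    have V: "head e \<in> V" "tail e \<in> V" using eE head_in_V tail_in_V by auto
    have "R (card V - 1) = V"
      using search_in_arcs_spans[OF es_E] ts(1) unfolding search_spans_def R_def by simp
    moreover have "head e \<noteq> s" using forward root_first V by (metis DiffI less_asym singletonD)
    ultimately obtain j where j: "j < card V - 1" "head e \<notin> R j" "R (Suc j) = insert (head e) (R j)"
      using search_reaches_at_step[of "head e" es ?T "card V - 1"] V unfolding R_def by blast
    have "tail e \<in> R (Suc j)"
    proof (rule ccontr)
      assume "tail e \<notin> R (Suc j)"
      then have "pos (head e) \<le> pos (tail e)" using increasing[of "Suc j"] j(3) V by blast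
      then show False using forward by simp
    qed
    then have "tail e \<in> R j" using j(3) forward by auto
    then have "e \<in> snd (search es (insert e ?T) (Suc j))"
      using search_insert_front_picks[OF es _ _ disj, of e ?T j] e nt eE j(2) unfolding R_def by auto
    then have "e \<in> search_tree es (insert e ?T)"
      unfolding search_tree_def using search_mono[of "Suc j" "card V - 1"] j(1) by auto
    moreover have "insert e ?T \<in> tree_fiber es ?T"
      unfolding tree_fiber_eq_interval[OF T_fiber] using e T_fiber unfolding fiber_top_def by blast
    ultimately show False using e unfolding tree_fiber_def by auto
  qed
qed

end

end

section \<open>Root-first optimal orders in Eulerian digraphs\<close>

locale eulerian_rooted_digraph =
  connected_eulerian_digraph V E tail head + rooted_digraph V E tail head s
  for V :: "'v set" and E :: "'e set" and tail head :: "'e \<Rightarrow> 'v" and s :: 'v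
begin

definition root_first_optimal :: "('v \<Rightarrow> nat) \<Rightarrow> bool" where
  "root_first_optimal pos \<longleftrightarrow>
     card (backward_arcs pos) = minfas E tail head \<and> (\<forall>v\<in>V - {s}. pos s < pos v)"

definition forward_reach :: "('v \<Rightarrow> nat) \<Rightarrow> 'v set" where
  "forward_reach pos = {v. (s, v) \<in> (arcrel (forward_arcs pos) tail head)\<^sup>*}"

lemma forward_reach_subset_V: "forward_reach pos \<subseteq> V"
proof
  fix v assume "v \<in> forward_reach pos"
  then have "(s, v) \<in> (arcrel (forward_arcs pos) tail head)\<^sup>*" unfolding forward_reach_def by simp
  then show "v \<in> V"
    by (induction rule: rtrancl_induct) (auto simp: root_in_V arcrel_def forward_arcs_def head_in_V)
qed

lemma root_in_forward_reach: "s \<in> forward_reach pos"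
  unfolding forward_reach_def by simp

text \<open>Lifting the vertices that come no later than \<open>s\<close> above everything else keeps the order
  optimal, since all arcs into the lifted block are backward.\<close>

lemma exists_root_first_optimal: "\<exists>pos. root_first_optimal pos"
proof -
  obtain pos0 where opt: "card (backward_arcs pos0) = minfas E tail head"
    using exists_order_backward_arcs_minfas by blast
  define P where "P = V - {v\<in>V - {s}. pos0 v \<le> pos0 s}"
  have P: "P \<subseteq> V" "s \<in> P" "V - P = {v\<in>V - {s}. pos0 v \<le> pos0 s}"
    unfolding P_def using root_in_V by auto
  have "\<forall>e\<in>E. tail e \<in> P \<and> head e \<in> V - P \<longrightarrow> pos0 (head e) \<le> pos0 (tail e)"
    using P(3) unfolding P_def using tail_in_V by fastforce
  then have "card (backward_arcs (lift_above P pos0)) \<le> card (backward_arcs pos0)"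
    by (rule card_backward_arcs_lift_above_le[OF P(1)])
  then have "card (backward_arcs (lift_above P pos0)) = minfas E tail head"
    using minfas_le_backward_arcs[of "lift_above P pos0"] opt by simp
  moreover have "lift_above P pos0 s < lift_above P pos0 v" if v: "v \<in> V - {s}" for v
  proof (cases "v \<in> V - P")
    case True then show ?thesis using lift_above_less P root_in_V by blast
  next
    case False then show ?thesis using v P(2,3) by (simp add: lift_above_eq)
  qed
  ultimately show ?thesis unfolding root_first_optimal_def by blast
qed

lemma arc_leaving_forward_reach_backward:
  assumes e: "e \<in> E" "tail e \<in> forward_reach pos" "head e \<notin> forward_reach pos"
  shows "pos (head e) \<le> pos (tail e)"
proof (rule ccontr)
  assume "\<not> ?thesis"
  then have "(tail e, head e) \<in> arcrel (forward_arcs pos) tail head"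
    using e unfolding arcrel_def forward_arcs_def by auto
  then have "head e \<in> forward_reach pos" using e unfolding forward_reach_def by (auto intro: rtrancl_into_rtrancl)
  then show False using e by simp
qed

lemma forward_reach_subset_lift_above:
  "forward_reach pos \<subseteq> forward_reach (lift_above (forward_reach pos) pos)"
proof
  let ?P = "forward_reach pos"
  fix v assume "v \<in> ?P"
  then have "(s, v) \<in> (arcrel (forward_arcs pos) tail head)\<^sup>*" unfolding forward_reach_def by simp
  then have "(s, v) \<in> (arcrel (forward_arcs (lift_above ?P pos)) tail head)\<^sup>* \<and> v \<in> ?P"
  proof (induction rule: rtrancl_induct)
    case base then show ?case using root_in_forward_reach by simp
  next
    case (step y z)
    then have "z \<in> ?P" unfolding forward_reach_def by (auto intro: rtrancl_into_rtrancl)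
    then have "(y, z) \<in> arcrel (forward_arcs (lift_above ?P pos)) tail head"
      using step unfolding arcrel_def forward_arcs_def by (auto simp: lift_above_eq)
    then show ?case using step \<open>z \<in> ?P\<close> by (auto intro: rtrancl_into_rtrancl)
  qed
  then show "v \<in> forward_reach (lift_above ?P pos)" unfolding forward_reach_def by simp
qed

text \<open>If not every vertex is reached from \<open>s\<close> along forward arcs, lifting the unreached vertices
  keeps the order optimal and makes an arc leaving the reached set forward.\<close>

lemma root_first_optimal_grow_forward_reach:
  assumes opt: "root_first_optimal pos" and not_all: "forward_reach pos \<noteq> V"
  shows "\<exists>pos'. root_first_optimal pos' \<and> forward_reach pos \<subset> forward_reach pos'"
proof -
  define P where "P = forward_reach pos"
  define pos' where "pos' = lift_above P pos"
  have P: "P \<subseteq> V" "s \<in> P" "P \<noteq> V"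
    using forward_reach_subset_V root_in_forward_reach not_all unfolding P_def by auto
  have "\<forall>e\<in>E. tail e \<in> P \<and> head e \<in> V - P \<longrightarrow> pos (head e) \<le> pos (tail e)"
    using arc_leaving_forward_reach_backward unfolding P_def by blast
  then have "card (backward_arcs pos') \<le> card (backward_arcs pos)"
    unfolding pos'_def by (rule card_backward_arcs_lift_above_le[OF P(1)])
  then have "card (backward_arcs pos') = minfas E tail head"
    using minfas_le_backward_arcs[of pos'] opt unfolding root_first_optimal_def by simp
  moreover have "pos' s < pos' v" if "v \<in> V - {s}" for v
    using opt that P lift_above_less[of s P v pos] root_in_V
    unfolding pos'_def root_first_optimal_def by (cases "v \<in> V - P") (auto simp: lift_above_eq)
  ultimately have opt': "root_first_optimal pos'" unfolding root_first_optimal_def by blast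
  have reach: "P \<subseteq> forward_reach pos'"
    using forward_reach_subset_lift_above unfolding P_def pos'_def by blast
  obtain e where e: "e \<in> E" "tail e \<in> P" "head e \<notin> P"
    using exists_arc_leaving[OF P(1) _ P(3)] P(2) by blast
  then have "(tail e, head e) \<in> arcrel (forward_arcs pos') tail head"
    using lift_above_less[of "tail e" P "head e" pos] P(1) head_in_V
    unfolding arcrel_def forward_arcs_def pos'_def by blast
  moreover have "(s, tail e) \<in> (arcrel (forward_arcs pos') tail head)\<^sup>*"
    using reach e unfolding forward_reach_def by auto
  ultimately have "head e \<in> forward_reach pos'" unfolding forward_reach_def by (auto intro: rtrancl_into_rtrancl)
  then show ?thesis using opt' reach e(3) unfolding P_def by blast
qed

lemma exists_root_first_optimal_forward_in_arcs:
  "\<exists>pos. root_first_optimal pos \<and> (\<forall>v\<in>V - {s}. \<exists>e\<in>E. head e = v \<and> pos (tail e) < pos v)"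
proof -
  have "\<exists>pos'. root_first_optimal pos' \<and> forward_reach pos' = V" if "root_first_optimal pos" for pos
    using that
  proof (induction "card (V - forward_reach pos)" arbitrary: pos rule: less_induct)
    case less
    show ?case
    proof (cases "forward_reach pos = V")
      case False
      then obtain pos' where pos': "root_first_optimal pos'" "forward_reach pos \<subset> forward_reach pos'"
        using root_first_optimal_grow_forward_reach less.prems by blast
      then have "V - forward_reach pos' \<subset> V - forward_reach pos"
        using forward_reach_subset_V[of pos'] by blast
      then have "card (V - forward_reach pos') < card (V - forward_reach pos)"
        using finite_V by (metis finite_Diff psubset_card_mono)
      then show ?thesis using less pos'(1) by blast
    qed (use less.prems in blast)
  qed
  then obtain pos where pos: "root_first_optimal pos" "forward_reach pos = V"
    using exists_root_first_optimal by blast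
  have "\<exists>e\<in>E. head e = v \<and> pos (tail e) < pos v" if v: "v \<in> V - {s}" for v
  proof -
    have "(s, v) \<in> (arcrel (forward_arcs pos) tail head)\<^sup>*" using pos(2) v unfolding forward_reach_def by auto
    then obtain u where "(u, v) \<in> arcrel (forward_arcs pos) tail head" using v by (metis DiffE insertCI rtranclE)
    then show ?thesis unfolding arcrel_def forward_arcs_def by auto
  qed
  then show ?thesis using pos(1) by blast
qed

lemma exists_parking_fn_level_eq:
  "\<exists>f\<in>parking_fns. (\<Sum>v\<in>V - {s}. f v) + (card V - 1) + minfas E tail head = card E"
proof -
  obtain pos where opt: "root_first_optimal pos"
    and in_arc: "\<forall>v\<in>V - {s}. \<exists>e\<in>E. head e = v \<and> pos (tail e) < pos v"
    using exists_root_first_optimal_forward_in_arcs by blast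
  define c where "c v = card {e\<in>E. head e = v \<and> pos (tail e) < pos v}" for v
  define f where "f v = (if v \<in> V - {s} then c v - 1 else 0)" for v
  have "f \<in> parking_fns"
    using forward_in_degree_parking_fn[OF in_arc] unfolding f_def c_def .
  moreover have "(\<Sum>v\<in>V - {s}. f v) = (\<Sum>v\<in>V - {s}. c v - 1)" unfolding f_def by simp
  ultimately show ?thesis
    using forward_in_degree_level[OF in_arc] opt card_backward_arcs_plus_forward_arcs[of pos]
    unfolding root_first_optimal_def c_def by (intro bexI[of _ f]) auto
qed

lemma degree_park: "int (degree (park V E tail head s)) = int (card E) - int (card V) + 1 - int (minfas E tail head)"
proof -
  define d where "d = card E - minfas E tail head - (card V - 1)"
  obtain f0 where f0: "f0 \<in> parking_fns" "(\<Sum>v\<in>V - {s}. f0 v) + (card V - 1) + minfas E tail head = card E"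
    using exists_parking_fn_level_eq by blast
  have "degree (park V E tail head s) = d"
    unfolding park_def
  proof (rule degree_sum_monom_one[OF finite_parking_fns f0(1)])
    show "(\<Sum>v\<in>V - {s}. f0 v) = d" using f0(2) unfolding d_def by linarith
    show "\<forall>f\<in>parking_fns. (\<Sum>v\<in>V - {s}. f v) \<le> d" using parking_fn_level_bound unfolding d_def by fastforce
  qed
  then show ?thesis using f0(2) card_V_pos unfolding d_def by linarith
qed

lemma search_spans_E: "E \<subseteq> set es \<Longrightarrow> search_spans es E"
  by (rule search_spansI) (use exists_arc_leaving in blast)+

lemma rank_E: "rank E = card V - 1"
proof -
  obtain es where "set es = E" using finite_E by (metis finite_list)
  then show ?thesis using rank_eq_if_search_spans[of E es] search_spans_E by simp
qed

lemma rank_eq_rank_E_iff: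
  assumes "A \<subseteq> E" "E \<subseteq> set es"
  shows "rank A = rank E \<longleftrightarrow> search_spans es A"
  using rank_eq_if_search_spans search_spans_if_rank_eq assms rank_E by metis

text \<open>Grouping the spanning sets by their search tree, each fiber contributes
  \<open>\<Sum>\<^sub>D (x - 1)\<^bsup>|D|\<^esup> = x\<^bsup>|fiber_top T - T|\<^esup>\<close>.\<close>

lemma greedoid_poly_eq_sum_trees:
  assumes es: "E \<subseteq> set es"
  shows "greedoid_poly_branching E tail head s =
    (\<Sum>T\<in>search_tree es ` spanning_sets es. monom 1 (card (fiber_top es T - T)))"
proof -
  have "{A. A \<subseteq> E \<and> rank A = rank E} = spanning_sets es"
    unfolding spanning_sets_def using rank_eq_rank_E_iff[OF _ es] by auto
  then have "greedoid_poly_branching E tail head s = (\<Sum>A\<in>spanning_sets es. [:-1, 1:] ^ (card A - rank A))"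
    unfolding greedoid_poly_branching_def by simp
  also have "\<dots> = (\<Sum>A\<in>spanning_sets es. [:-1, 1:] ^ (card A - (card V - 1)))"
    by (rule sum.cong) (auto simp: spanning_sets_def rank_eq_if_search_spans)
  also have "\<dots> = (\<Sum>T\<in>search_tree es ` spanning_sets es. \<Sum>A\<in>tree_fiber es T. [:-1, 1:] ^ (card A - (card V - 1)))"
    unfolding tree_fiber_def by (rule sum.image_gen[OF finite_spanning_sets])
  also have "\<dots> = (\<Sum>T\<in>search_tree es ` spanning_sets es. monom 1 (card (fiber_top es T - T)))"
  proof (rule sum.cong)
    fix T assume "T \<in> search_tree es ` spanning_sets es"
    then have "T \<in> tree_fiber es T" by (rule search_tree_in_tree_fiber)
    then show "(\<Sum>A\<in>tree_fiber es T. [:-1, 1::int:] ^ (card A - (card V - 1))) = monom 1 (card (fiber_top es T - T))"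
      by (rule sum_tree_fiber)
  qed simp
  finally show ?thesis .
qed

text \<open>List the arcs of a tree of forward in-arcs of a root-first optimal order last, sorted by the
  position of their heads; then the arcs in its fiber top are all backward.\<close>

lemma exists_tree_fiber_top_le_minfas:
  "\<exists>es T. set es = E \<and> T \<in> search_tree es ` spanning_sets es \<and> card (fiber_top es T - T) \<le> minfas E tail head"
proof -
  obtain pos where opt: "root_first_optimal pos"
    and forward: "\<forall>v\<in>V - {s}. \<exists>e\<in>E. head e = v \<and> pos (tail e) < pos v"
    using exists_root_first_optimal_forward_in_arcs by blast
  define in_arc where "in_arc v = (SOME e. e \<in> E \<and> head e = v \<and> pos (tail e) < pos v)" for v
  have "in_arc v \<in> E \<and> head (in_arc v) = v \<and> pos (tail (in_arc v)) < pos v" if "v \<in> V - {s}" for v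
    unfolding in_arc_def by (rule someI_ex) (use forward that in blast)
  then have in_arc: "\<forall>v\<in>V - {s}. in_arc v \<in> E \<and> head (in_arc v) = v \<and> pos (tail (in_arc v)) < pos v"
    by blast
  have root_first: "\<forall>v\<in>V - {s}. pos s < pos v" using opt unfolding root_first_optimal_def by blast
  note in_arcs_E = in_arcs_subset_E[OF root_first in_arc]
  have "finite (in_arc ` (V - {s}))" using finite_V by simp
  then obtain ts0 where ts0: "set ts0 = in_arc ` (V - {s})" by (metis finite_list)
  define ts where "ts = sort_key (\<lambda>e. pos (head e)) ts0"
  have ts: "set ts = in_arc ` (V - {s})" "sorted (map (\<lambda>e. pos (head e)) ts)"
  proof -
    show "set ts = in_arc ` (V - {s})" unfolding ts_def using ts0 by simp
    show "sorted (map (\<lambda>e. pos (head e)) ts)" unfolding ts_def by (rule sorted_sort_key)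
  qed
  have "finite (E - set ts)" using finite_E by simp
  then obtain nt where nt: "set nt = E - set ts" by (metis finite_list)
  define es where "es = nt @ ts"
  have es_E: "set es = E" unfolding es_def using nt ts(1) in_arcs_E by auto
  have "set ts \<in> spanning_sets es"
    using search_in_arcs_spans[OF root_first in_arc] in_arcs_E es_E ts(1)
    unfolding spanning_sets_def by simp
  moreover have "search_tree es (set ts) = set ts"
    using search_tree_in_arcs[OF root_first in_arc] es_E ts(1) by simp
  ultimately have "set ts \<in> search_tree es ` spanning_sets es" by (metis image_eqI)
  moreover have "card (fiber_top es (set ts) - set ts) \<le> card (backward_arcs pos)"
    using fiber_top_in_arcs_backward[OF root_first in_arc es_def ts nt] finite_E
    unfolding backward_arcs_def by (intro card_mono) auto
  ultimately show ?thesis using es_E opt unfolding root_first_optimal_def by auto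
qed

lemma greedoid_poly_low_coeffs:
  "(\<forall>i < minfas E tail head. coeff (greedoid_poly_branching E tail head s) i = 0) \<and>
   coeff (greedoid_poly_branching E tail head s) (minfas E tail head) \<noteq> 0"
proof -
  obtain es T0 where es: "set es = E" and T0: "T0 \<in> search_tree es ` spanning_sets es"
    and T0_le: "card (fiber_top es T0 - T0) \<le> minfas E tail head"
    using exists_tree_fiber_top_le_minfas by blast
  define Ts where "Ts = search_tree es ` spanning_sets es"
  define k where "k T = card (fiber_top es T - T)" for T
  have fin: "finite Ts" unfolding Ts_def using finite_spanning_sets by simp
  have es_E: "E \<subseteq> set es" using es by simp
  have coeff_eq: "coeff (greedoid_poly_branching E tail head s) i = int (card {T\<in>Ts. k T = i})" for i
    unfolding greedoid_poly_eq_sum_trees[OF es_E] Ts_def k_def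
    using fin unfolding Ts_def by (rule coeff_sum_monom_one)
  have lower: "minfas E tail head \<le> k T" if "T \<in> Ts" for T
    using search_tree_in_tree_fiber[of T es] that minfas_le_card_fiber_top_diff
    unfolding Ts_def k_def by blast
  show ?thesis
  proof (intro conjI allI impI)
    fix i assume "i < minfas E tail head"
    then have "{T\<in>Ts. k T = i} = {}" using lower by force
    then have "card {T\<in>Ts. k T = i} = 0" by (metis card.empty)
    then show "coeff (greedoid_poly_branching E tail head s) i = 0" using coeff_eq[of i] by simp
  next
    have "T0 \<in> {T\<in>Ts. k T = minfas E tail head}"
      using T0 T0_le lower[of T0] unfolding Ts_def k_def by auto
    then have "card {T\<in>Ts. k T = minfas E tail head} \<noteq> 0" using fin by auto
    then show "coeff (greedoid_poly_branching E tail head s) (minfas E tail head) \<noteq> 0"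
      using coeff_eq by simp
  qed
qed

end

theorem theorem1p5:
  fixes V :: "'v set" and E :: "'e set" and tail head :: "'e \<Rightarrow> 'v" and s :: 'v
  assumes "digraph V E tail head"
    and "connected_digraph V E tail head"
    and "eulerian V E tail head"
    and "s \<in> V"
  shows "int (degree (park V E tail head s)) =
           int (card E) - int (card V) + 1 - int (minfas E tail head) \<and>
         (\<forall>i < minfas E tail head. coeff (greedoid_poly_branching E tail head s) i = 0) \<and>
         coeff (greedoid_poly_branching E tail head s) (minfas E tail head) \<noteq> 0"
proof -
  interpret eulerian_rooted_digraph V E tail head s
    using assms by unfold_locales
  show ?thesis using degree_park greedoid_poly_low_coeffs by simp
qed

end
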